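(* Let $(X,d^\star)$ be a $\star$-metric space, $\{x_n\}_{n\in\mathbb{N}}$ a sequence in $X$ and $x_0\in X$. Then $\{x_n\}$ converges to $x_0$ in the topological space $(X,\mathscr{T}_{d^\star})$ if and only if $\{x_n\}$ converges to $x_0$ under $d^\star$, i.e. for every $\epsilon>0$ there is $k\in\mathbb{N}$ with $d^\star(x_0,x_n)<\epsilon$ for all $n\ge k$.
   Context: A $t$-definer is a function $\star:[0,\infty)\times[0,\infty)\to[0,\infty)$ such that for all $a,b,c\ge 0$: $a\star b=b\star a$; $a\star(b\star c)=(a\star b)\star c$; if $a\le b$ then $a\star c\le b\star c$; $a\star 0=a$; and $\star$ is continuous in its first variable with respect to the Euclidean topology. Given a nonempty set $X$ and a $t$-definer $\star$, a $\star$-metric on $X$ is a function $d^\star:X\times X\to[0,\infty)$ such that for all $x,y,z\in X$: $d^\star(x,y)=0$ iff $x=y$; $d^\star(x,y)=d^\star(y,x)$; and $d^\star(x,y)\le d^\star(x,z)\star d^\star(z,y)$. Put $B_{d^\star}(a,r)=\{x\in X: d^\star(a,x)<r\}$ and let $\mathscr{T}_{d^\star}$ be the topology consisting of all $U\subseteq X$ such that for each $a\in U$ some $B_{d^\star}(a,r)$, $r>0$, is contained in $U$. *)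

theory Defs
  imports "HOL-Analysis.Analysis"
begin

text \<open>A t-definer: a binary operation on [0,\<infinity>) (represented as a real function
whose behaviour is only constrained on nonnegative arguments).\<close>
definition t_definer :: "(real \<Rightarrow> real \<Rightarrow> real) \<Rightarrow> bool" where
  "t_definer s \<longleftrightarrow>
     (\<forall>a\<ge>0. \<forall>b\<ge>0. s a b \<ge> 0) \<and>
     (\<forall>a\<ge>0. \<forall>b\<ge>0. s a b = s b a) \<and>
     (\<forall>a\<ge>0. \<forall>b\<ge>0. \<forall>c\<ge>0. s a (s b c) = s (s a b) c) \<and>
     (\<forall>a\<ge>0. \<forall>b\<ge>0. \<forall>c\<ge>0. a \<le> b \<longrightarrow> s a c \<le> s b c) \<and>
     (\<forall>a\<ge>0. s a 0 = a) \<and>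
     (\<forall>c\<ge>0. continuous_on {0..} (\<lambda>a. s a c))"

definition star_metric :: "(real \<Rightarrow> real \<Rightarrow> real) \<Rightarrow> 'a set \<Rightarrow> ('a \<Rightarrow> 'a \<Rightarrow> real) \<Rightarrow> bool" where
  "star_metric s X d \<longleftrightarrow>
     (\<forall>x\<in>X. \<forall>y\<in>X. d x y \<ge> 0) \<and>
     (\<forall>x\<in>X. \<forall>y\<in>X. d x y = 0 \<longleftrightarrow> x = y) \<and>
     (\<forall>x\<in>X. \<forall>y\<in>X. d x y = d y x) \<and>
     (\<forall>x\<in>X. \<forall>y\<in>X. \<forall>z\<in>X. d x y \<le> s (d x z) (d z y))"

definition star_ball :: "'a set \<Rightarrow> ('a \<Rightarrow> 'a \<Rightarrow> real) \<Rightarrow> 'a \<Rightarrow> real \<Rightarrow> 'a set" where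
  "star_ball X d a r = {x \<in> X. d a x < r}"

definition star_open :: "'a set \<Rightarrow> ('a \<Rightarrow> 'a \<Rightarrow> real) \<Rightarrow> 'a set \<Rightarrow> bool" where
  "star_open X d U \<longleftrightarrow> U \<subseteq> X \<and> (\<forall>a\<in>U. \<exists>r>0. star_ball X d a r \<subseteq> U)"

text \<open>The topology T_{d*} on X (star_open is a topology on X; this is part of the
later proof obligation, the statement uses it via the library type topology).\<close>
definition star_topology :: "'a set \<Rightarrow> ('a \<Rightarrow> 'a \<Rightarrow> real) \<Rightarrow> 'a topology" where
  "star_topology X d = topology (star_open X d)"

end

theory Submission
  imports Defs
begin

text \<open>Since \<open>0 \<star> r = r\<close> and \<open>\<star>\<close> is continuous in its first argument, for \<open>y\<close> in the ball
  \<open>B(a, e)\<close> with \<open>r = d\<^sup>\<star>(a, y) < e\<close> there is \<open>\<delta> > 0\<close> such that \<open>c \<star> r < e\<close> whenever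
  \<open>0 \<le> c < \<delta>\<close>; the \<open>\<star>\<close>-triangle inequality then puts \<open>B(y, \<delta>)\<close> inside \<open>B(a, e)\<close>.
  So the balls are open, they form a neighbourhood base of \<open>\<T>\<^bsub>d\<^sup>\<star>\<^esub>\<close>, and topological
  convergence is convergence of the distances.\<close>

lemma t_definer_commute: "t_definer s \<Longrightarrow> a \<ge> 0 \<Longrightarrow> b \<ge> 0 \<Longrightarrow> s a b = s b a"
  unfolding t_definer_def by metis

lemma t_definer_zero_right: "t_definer s \<Longrightarrow> a \<ge> 0 \<Longrightarrow> s a 0 = a"
  unfolding t_definer_def by metis

lemma t_definer_zero_left: "t_definer s \<Longrightarrow> a \<ge> 0 \<Longrightarrow> s 0 a = a"
  using t_definer_commute[of s 0 a] t_definer_zero_right by simp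

lemma t_definer_continuous_on: "t_definer s \<Longrightarrow> c \<ge> 0 \<Longrightarrow> continuous_on {0..} (\<lambda>a. s a c)"
  unfolding t_definer_def by metis

lemma star_metric_nonneg: "star_metric s X d \<Longrightarrow> x \<in> X \<Longrightarrow> y \<in> X \<Longrightarrow> d x y \<ge> 0"
  unfolding star_metric_def by metis

lemma star_metric_self: "star_metric s X d \<Longrightarrow> x \<in> X \<Longrightarrow> d x x = 0"
  unfolding star_metric_def by metis

lemma star_metric_triangle:
  "star_metric s X d \<Longrightarrow> x \<in> X \<Longrightarrow> y \<in> X \<Longrightarrow> z \<in> X \<Longrightarrow> d x y \<le> s (d x z) (d z y)"
  unfolding star_metric_def by metis

lemma istopology_star_open: "istopology (star_open X d)"
  unfolding istopology_def star_open_def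
proof (intro conjI allI impI)
  fix S T
  assume S: "S \<subseteq> X \<and> (\<forall>a\<in>S. \<exists>r>0. star_ball X d a r \<subseteq> S)"
    and T: "T \<subseteq> X \<and> (\<forall>a\<in>T. \<exists>r>0. star_ball X d a r \<subseteq> T)"
  show "S \<inter> T \<subseteq> X" using S by blast
  show "\<forall>a\<in>S \<inter> T. \<exists>r>0. star_ball X d a r \<subseteq> S \<inter> T"
  proof
    fix a assume "a \<in> S \<inter> T"
    then obtain r1 r2 where "r1 > 0" "star_ball X d a r1 \<subseteq> S" "r2 > 0" "star_ball X d a r2 \<subseteq> T"
      using S T by blast
    then show "\<exists>r>0. star_ball X d a r \<subseteq> S \<inter> T"
      by (intro exI[of _ "min r1 r2"]) (auto simp: star_ball_def)
  qed
next
  fix K assume K: "\<forall>S\<in>K. S \<subseteq> X \<and> (\<forall>a\<in>S. \<exists>r>0. star_ball X d a r \<subseteq> S)"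
  then show "\<Union>K \<subseteq> X" by blast
  show "\<forall>a\<in>\<Union>K. \<exists>r>0. star_ball X d a r \<subseteq> \<Union>K"
  proof
    fix a assume "a \<in> \<Union>K"
    then obtain S where "S \<in> K" "a \<in> S" by blast
    then obtain r where "r > 0" "star_ball X d a r \<subseteq> S" using K by blast
    then show "\<exists>r>0. star_ball X d a r \<subseteq> \<Union>K" using \<open>S \<in> K\<close> by blast
  qed
qed

lemma openin_star_topology: "openin (star_topology X d) = star_open X d"
  unfolding star_topology_def using istopology_star_open topology_inverse' by blast

lemma topspace_star_topology: "topspace (star_topology X d) = X"
proof -
  have "star_open X d X"
    by (auto simp: star_open_def star_ball_def intro: exI[of _ 1])
  then show ?thesis
    unfolding topspace_def openin_star_topology by (auto simp: star_open_def)
qed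

lemma centre_in_star_ball:
  assumes "star_metric s X d" and "a \<in> X" and "e > 0"
  shows "a \<in> star_ball X d a e"
  using assms star_metric_self[OF assms(1,2)] by (simp add: star_ball_def)

lemma star_open_star_ball:
  assumes ts: "t_definer s" and sm: "star_metric s X d" and "a \<in> X"
  shows "star_open X d (star_ball X d a e)"
  unfolding star_open_def
proof (intro conjI ballI)
  show "star_ball X d a e \<subseteq> X" by (auto simp: star_ball_def)
  fix y assume "y \<in> star_ball X d a e"
  then have yX: "y \<in> X" and "d a y < e" by (auto simp: star_ball_def)
  define r where "r = d a y"
  have "r < e" and r0: "r \<ge> 0"
    using \<open>d a y < e\<close> star_metric_nonneg[OF sm \<open>a \<in> X\<close> yX] by (simp_all add: r_def)
  have s0r: "s 0 r = r" and cont: "continuous_on {0..} (\<lambda>c. s c r)"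
    using t_definer_zero_left[OF ts r0] t_definer_continuous_on[OF ts r0] .
  obtain \<delta> where "\<delta> > 0" and \<delta>: "\<And>c. c \<ge> 0 \<Longrightarrow> c < \<delta> \<Longrightarrow> s c r < e"
  proof -
    have "(0::real) \<in> {0..}" and "e - r > 0" using \<open>r < e\<close> by simp_all
    then obtain \<delta> where "\<delta> > 0" and \<delta>: "\<forall>c\<in>{0..}. dist c 0 < \<delta> \<longrightarrow> dist (s c r) (s 0 r) < e - r"
      using cont unfolding continuous_on_iff by blast
    show ?thesis
    proof (rule that[OF \<open>\<delta> > 0\<close>])
      fix c :: real assume "c \<ge> 0" "c < \<delta>"
      then have "\<bar>s c r - r\<bar> < e - r"
        using \<delta> s0r by (simp add: dist_real_def)
      then show "s c r < e" by linarith
    qed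
  qed
  show "\<exists>\<delta>>0. star_ball X d y \<delta> \<subseteq> star_ball X d a e"
  proof (intro exI conjI subsetI)
    fix z assume "z \<in> star_ball X d y \<delta>"
    then have zX: "z \<in> X" and "d y z < \<delta>" by (auto simp: star_ball_def)
    have "d y z \<ge> 0" using star_metric_nonneg[OF sm yX zX] .
    have "d a z \<le> s r (d y z)"
      using star_metric_triangle[OF sm \<open>a \<in> X\<close> zX yX] by (simp add: r_def)
    also have "\<dots> = s (d y z) r"
      using t_definer_commute[OF ts r0 \<open>d y z \<ge> 0\<close>] .
    also have "\<dots> < e"
      using \<delta> \<open>d y z \<ge> 0\<close> \<open>d y z < \<delta>\<close> .
    finally show "z \<in> star_ball X d a e" using zX by (simp add: star_ball_def)
  qed (rule \<open>\<delta> > 0\<close>)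
qed

lemma limitin_star_topology:
  assumes "t_definer s" and "star_metric s X d"
  shows "limitin (star_topology X d) f l F \<longleftrightarrow>
         l \<in> X \<and> (\<forall>e>0. eventually (\<lambda>t. f t \<in> star_ball X d l e) F)"
proof
  assume lim: "limitin (star_topology X d) f l F"
  then have "l \<in> X"
    by (simp add: limitin_def topspace_star_topology)
  moreover have "eventually (\<lambda>t. f t \<in> star_ball X d l e) F" if "e > 0" for e
  proof -
    have "\<forall>U. star_open X d U \<and> l \<in> U \<longrightarrow> eventually (\<lambda>t. f t \<in> U) F"
      using lim by (simp add: limitin_def openin_star_topology)
    then show ?thesis
      using centre_in_star_ball[OF assms(2) \<open>l \<in> X\<close> that] star_open_star_ball[OF assms \<open>l \<in> X\<close>]
      by blast
  qed
  ultimately show "l \<in> X \<and> (\<forall>e>0. eventually (\<lambda>t. f t \<in> star_ball X d l e) F)"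
    by blast
next
  assume balls: "l \<in> X \<and> (\<forall>e>0. eventually (\<lambda>t. f t \<in> star_ball X d l e) F)"
  show "limitin (star_topology X d) f l F"
    unfolding limitin_def topspace_star_topology openin_star_topology
  proof (intro conjI allI impI)
    fix U assume "star_open X d U \<and> l \<in> U"
    then obtain e where "e > 0" "star_ball X d l e \<subseteq> U"
      unfolding star_open_def by blast
    have "eventually (\<lambda>t. f t \<in> star_ball X d l e) F"
      using balls \<open>e > 0\<close> by blast
    then show "eventually (\<lambda>t. f t \<in> U) F"
      by (rule eventually_mono) (use \<open>star_ball X d l e \<subseteq> U\<close> in blast)
  qed (use balls in blast)
qed

theorem proposition4p2:
  fixes s :: "real \<Rightarrow> real \<Rightarrow> real" and X :: "'a set"
    and d :: "'a \<Rightarrow> 'a \<Rightarrow> real" and x :: "nat \<Rightarrow> 'a" and x0 :: 'a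
  assumes "t_definer s" and "star_metric s X d"
    and "\<forall>n. x n \<in> X" and "x0 \<in> X"
  shows "limitin (star_topology X d) x x0 sequentially \<longleftrightarrow>
         (\<forall>\<epsilon>>0. \<exists>k. \<forall>n\<ge>k. d x0 (x n) < \<epsilon>)"
proof -
  have "x n \<in> star_ball X d x0 e \<longleftrightarrow> d x0 (x n) < e" for n e
    using assms(3) by (simp add: star_ball_def)
  then show ?thesis
    unfolding limitin_star_topology[OF assms(1,2)] eventually_sequentially
    using assms(4) by presburger
qed

end
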